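(* Let $q\in\mathbb{C}\setminus\{0\}$ be not a root of unity, and let $\pi$ be a $U_q(\mathfrak{sl}_2)$-module algebra structure on $\mathbb{C}_q[x^{\pm1},y^{\pm1}]$ such that $\pi(\mathsf{k})(x)=\alpha x$, $\pi(\mathsf{k})(y)=\beta y$ with $\alpha,\beta\in\mathbb{C}\setminus\{0\}$, and write (finite sums) $$\pi(\mathsf{e})(x)=\sum_{i,j}a_{i,j}x^iy^j,\quad \pi(\mathsf{e})(y)=\sum_{i,j}b_{i,j}x^iy^j,\quad \pi(\mathsf{f})(x)=\sum_{i,j}c_{i,j}x^iy^j,\quad \pi(\mathsf{f})(y)=\sum_{i,j}d_{i,j}x^iy^j,$$ with $a_{i,j},b_{i,j},c_{i,j},d_{i,j}\in\mathbb{C}$. Then for all $i,j\in\mathbb{Z}$, $$a_{i+1,j}(q^i-\beta)=b_{i,j+1}(1-\alpha q^j),\qquad c_{i+1,j}(1-\beta^{-1}q^i)=d_{i,j+1}(q^j-\alpha^{-1}).$$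
   Context: $\mathbb{C}_q[x^{\pm1},y^{\pm1}]$ is the unital algebra generated by $x,y,x^{-1},y^{-1}$ with relations $yx=qxy$, $xx^{-1}=x^{-1}x=yy^{-1}=y^{-1}y=\mathbf{1}$; the monomials $x^iy^j$, $i,j\in\mathbb{Z}$, form a basis. $U_q(\mathfrak{sl}_2)$ is the unital algebra generated by $\mathsf{k},\mathsf{k}^{-1},\mathsf{e},\mathsf{f}$ with relations $\mathsf{k}\mathsf{k}^{-1}=\mathsf{k}^{-1}\mathsf{k}=\mathbf{1}$, $\mathsf{k}\mathsf{e}=q^2\mathsf{e}\mathsf{k}$, $\mathsf{k}\mathsf{f}=q^{-2}\mathsf{f}\mathsf{k}$, $\mathsf{e}\mathsf{f}-\mathsf{f}\mathsf{e}=\frac{\mathsf{k}-\mathsf{k}^{-1}}{q-q^{-1}}$, with Hopf structure $\Delta(\mathsf{k})=\mathsf{k}\otimes\mathsf{k}$, $\Delta(\mathsf{e})=\mathbf{1}\otimes\mathsf{e}+\mathsf{e}\otimes\mathsf{k}$, $\Delta(\mathsf{f})=\mathsf{f}\otimes\mathbf{1}+\mathsf{k}^{-1}\otimes\mathsf{f}$, $\varepsilon(\mathsf{k})=1$, $\varepsilon(\mathsf{e})=\varepsilon(\mathsf{f})=0$. A $U_q(\mathfrak{sl}_2)$-module algebra structure on a unital algebra $A$ is an algebra homomorphism $\pi:U_q(\mathfrak{sl}_2)\to\operatorname{End}_\mathbb{C}A$ with $\pi(h)(ab)=\sum_i\pi(h_i')(a)\pi(h_i'')(b)$ (where $\Delta(h)=\sum_i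 h_i'\otimes h_i''$) and $\pi(h)(\mathbf{1})=\varepsilon(h)\mathbf{1}$. *)

theory Defs
  imports Complex_Main "HOL-Library.Poly_Mapping"
begin

text \<open>The quantum torus C_q[x^{+-1},y^{+-1}]: an element is a finitely supported
  coefficient function on the basis monomials x^i y^j, (i,j) in Z x Z.\<close>

type_synonym qtorus = "(int \<times> int) \<Rightarrow>\<^sub>0 complex"

definition qmono :: "int \<Rightarrow> int \<Rightarrow> qtorus" where
  "qmono i j = Poly_Mapping.single (i, j) 1"

definition qone :: qtorus where "qone = qmono 0 0"
definition qx :: qtorus where "qx = qmono 1 0"
definition qy :: qtorus where "qy = qmono 0 1"

definition qsmult :: "complex \<Rightarrow> qtorus \<Rightarrow> qtorus" where
  "qsmult c a = Poly_Mapping.map (\<lambda>v. c * v) a"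

text \<open>Multiplication: (x^i y^j)(x^k y^l) = q^(j k) x^(i+k) y^(j+l), from y x = q x y.\<close>
definition qmult :: "complex \<Rightarrow> qtorus \<Rightarrow> qtorus \<Rightarrow> qtorus" where
  "qmult q a b = (\<Sum>(i, j)\<in>Poly_Mapping.keys a. \<Sum>(k, l)\<in>Poly_Mapping.keys b.
      Poly_Mapping.single (i + k, j + l) (Poly_Mapping.lookup a (i, j) * Poly_Mapping.lookup b (k, l) * q powi (j * k)))"

definition qlinear :: "(qtorus \<Rightarrow> qtorus) \<Rightarrow> bool" where
  "qlinear T \<longleftrightarrow> (\<forall>a b. T (a + b) = T a + T b) \<and> (\<forall>c a. T (qsmult c a) = qsmult c (T a))"

text \<open>A U_q(sl_2)-module algebra structure on the quantum torus, given by the images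
  K = pi(k), Ki = pi(k^{-1}), E = pi(e), F = pi(f) of the generators: linear maps
  satisfying the defining relations of U_q(sl_2) (so that they define an algebra
  homomorphism U_q(sl_2) -> End A), together with the compatibility with
  multiplication and unit on the generators (via Delta and epsilon).\<close>
definition module_algebra ::
  "complex \<Rightarrow> (qtorus \<Rightarrow> qtorus) \<Rightarrow> (qtorus \<Rightarrow> qtorus) \<Rightarrow> (qtorus \<Rightarrow> qtorus) \<Rightarrow> (qtorus \<Rightarrow> qtorus) \<Rightarrow> bool"
where
  "module_algebra q K Ki E F \<longleftrightarrow>
     qlinear K \<and> qlinear Ki \<and> qlinear E \<and> qlinear F \<and>
     (\<forall>a. K (Ki a) = a) \<and> (\<forall>a. Ki (K a) = a) \<and>
     (\<forall>a. K (E a) = qsmult (q ^ 2) (E (K a))) \<and>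
     (\<forall>a. K (F a) = qsmult (inverse q ^ 2) (F (K a))) \<and>
     (\<forall>a. E (F a) - F (E a) = qsmult (1 / (q - inverse q)) (K a - Ki a)) \<and>
     (\<forall>a b. K (qmult q a b) = qmult q (K a) (K b)) \<and>
     (\<forall>a b. Ki (qmult q a b) = qmult q (Ki a) (Ki b)) \<and>
     (\<forall>a b. E (qmult q a b) = qmult q a (E b) + qmult q (E a) (K b)) \<and>
     (\<forall>a b. F (qmult q a b) = qmult q (F a) b + qmult q (Ki a) (F b)) \<and>
     K qone = qone \<and> Ki qone = qone \<and> E qone = 0 \<and> F qone = 0"

end

theory Submission
  imports Defs
begin

text \<open>Apply \<open>E\<close> and \<open>F\<close> to the defining relation \<open>y x = q x y\<close> and expand both sides with the
  twisted Leibniz rules. Since \<open>x\<close> and \<open>y\<close> are eigenvectors of \<open>K\<close> (hence of \<open>K\<^sup>-\<^sup>1\<close>), every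
  product that occurs is a monomial times an unknown image, so comparing the coefficients of
  \<open>x\<^sup>i\<^sup>+\<^sup>1 y\<^sup>j\<^sup>+\<^sup>1\<close> gives a linear relation between one coefficient of \<open>E x\<close> and one of \<open>E y\<close>
  (resp. \<open>F x\<close>, \<open>F y\<close>); the common factor \<open>q\<close> then cancels.\<close>

lemma lookup_qsmult: "Poly_Mapping.lookup (qsmult c a) k = c * Poly_Mapping.lookup a k"
  by (simp add: qsmult_def Poly_Mapping.map.rep_eq when_def)

lemma qsmult_qsmult: "qsmult c (qsmult d a) = qsmult (c * d) a"
  by (rule poly_mapping_eqI) (simp add: lookup_qsmult)

lemma qsmult_1: "qsmult 1 a = a"
  by (rule poly_mapping_eqI) (simp add: lookup_qsmult)

lemma qsmult_qmono: "qsmult c (qmono a b) = Poly_Mapping.single (a, b) c"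
  by (rule poly_mapping_eqI) (simp add: lookup_qsmult qmono_def lookup_single when_def)

lemma lookup_qmult_single_left:
  "Poly_Mapping.lookup (qmult q (Poly_Mapping.single (a, b) c) p) (m, n) =
     c * Poly_Mapping.lookup p (m - a, n - b) * q powi (b * (m - a))"
proof (cases "c = 0")
  case True
  then show ?thesis by (simp add: qmult_def)
next
  case False
  have "Poly_Mapping.lookup (qmult q (Poly_Mapping.single (a, b) c) p) (m, n) =
     (\<Sum>x\<in>Poly_Mapping.keys p.
        if x = (m - a, n - b) then c * Poly_Mapping.lookup p x * q powi (b * fst x) else 0)"
    unfolding qmult_def using False
    by (auto simp: lookup_sum lookup_single when_def case_prod_beta prod_eq_iff intro!: sum.cong)
  also have "\<dots> = c * Poly_Mapping.lookup p (m - a, n - b) * q powi (b * (m - a))"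
    by (subst sum.delta) (auto simp: in_keys_iff simp del: prod.inject)
  finally show ?thesis .
qed

lemma lookup_qmult_single_right:
  "Poly_Mapping.lookup (qmult q p (Poly_Mapping.single (a, b) c)) (m, n) =
     c * Poly_Mapping.lookup p (m - a, n - b) * q powi ((n - b) * a)"
proof (cases "c = 0")
  case True
  then show ?thesis by (simp add: qmult_def)
next
  case False
  have "Poly_Mapping.lookup (qmult q p (Poly_Mapping.single (a, b) c)) (m, n) =
     (\<Sum>x\<in>Poly_Mapping.keys p.
        if x = (m - a, n - b) then c * Poly_Mapping.lookup p x * q powi (snd x * a) else 0)"
    unfolding qmult_def using False
    by (auto simp: lookup_sum lookup_single when_def case_prod_beta prod_eq_iff intro!: sum.cong)
  also have "\<dots> = c * Poly_Mapping.lookup p (m - a, n - b) * q powi ((n - b) * a)"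
    by (subst sum.delta) (auto simp: in_keys_iff simp del: prod.inject)
  finally show ?thesis .
qed

lemma qmult_qy_qx: "qmult q qy qx = qsmult q (qmult q qx qy)"
  unfolding qmult_def qx_def qy_def qmono_def qsmult_def
  by (simp add: Poly_Mapping.map_single)

lemma eigenvector_inverse:
  assumes "qlinear Ki" and "\<forall>a. Ki (K a) = a" and "K a = qsmult c a" and "c \<noteq> 0"
  shows "Ki a = qsmult (inverse c) a"
proof -
  have "qsmult c (Ki a) = a"
    using assms(1-3) unfolding qlinear_def by metis
  then have "qsmult (inverse c) (qsmult c (Ki a)) = qsmult (inverse c) a"
    by simp
  then show ?thesis
    using \<open>c \<noteq> 0\<close> by (simp add: qsmult_qsmult qsmult_1)
qed

lemma coeff_relation_E:
  fixes q \<alpha> \<beta> :: complex and K E :: "qtorus \<Rightarrow> qtorus"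
  assumes "q \<noteq> 0"
    and E_smult: "\<forall>c a. E (qsmult c a) = qsmult c (E a)"
    and E_mult: "\<forall>a b. E (qmult q a b) = qmult q a (E b) + qmult q (E a) (K b)"
    and Kx: "K qx = qsmult \<alpha> qx" and Ky: "K qy = qsmult \<beta> qy"
  shows "Poly_Mapping.lookup (E qx) (i + 1, j) * (q powi i - \<beta>) =
         Poly_Mapping.lookup (E qy) (i, j + 1) * (1 - \<alpha> * q powi j)"
proof -
  have "E (qmult q qy qx) = qsmult q (E (qmult q qx qy))"
    by (simp add: qmult_qy_qx E_smult)
  then have "qmult q qy (E qx) + qmult q (E qy) (Poly_Mapping.single (1, 0) \<alpha>) =
      qsmult q (qmult q qx (E qy) + qmult q (E qx) (Poly_Mapping.single (0, 1) \<beta>))"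
    using Kx Ky by (simp add: E_mult qsmult_qmono qx_def qy_def)
  from arg_cong[OF this, of "\<lambda>p. Poly_Mapping.lookup p (i + 1, j + 1)"]
  have "q * (Poly_Mapping.lookup (E qx) (i + 1, j) * q powi i
             + \<alpha> * Poly_Mapping.lookup (E qy) (i, j + 1) * q powi j)
      = q * (Poly_Mapping.lookup (E qy) (i, j + 1) + \<beta> * Poly_Mapping.lookup (E qx) (i + 1, j))"
    using \<open>q \<noteq> 0\<close>
    by (simp add: lookup_add lookup_qsmult lookup_qmult_single_left lookup_qmult_single_right
        qx_def qy_def qmono_def power_int_add algebra_simps)
  then show ?thesis
    unfolding mult_left_cancel[OF \<open>q \<noteq> 0\<close>] by algebra
qed

lemma coeff_relation_F:
  fixes q \<alpha> \<beta> :: complex and Ki F :: "qtorus \<Rightarrow> qtorus"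
  assumes "q \<noteq> 0"
    and F_smult: "\<forall>c a. F (qsmult c a) = qsmult c (F a)"
    and F_mult: "\<forall>a b. F (qmult q a b) = qmult q (F a) b + qmult q (Ki a) (F b)"
    and Kix: "Ki qx = qsmult \<alpha> qx" and Kiy: "Ki qy = qsmult \<beta> qy"
  shows "Poly_Mapping.lookup (F qx) (i + 1, j) * (1 - \<beta> * q powi i) =
         Poly_Mapping.lookup (F qy) (i, j + 1) * (q powi j - \<alpha>)"
proof -
  have "F (qmult q qy qx) = qsmult q (F (qmult q qx qy))"
    by (simp add: qmult_qy_qx F_smult)
  then have "qmult q (F qy) qx + qmult q (Poly_Mapping.single (0, 1) \<beta>) (F qx) =
      qsmult q (qmult q (F qx) qy + qmult q (Poly_Mapping.single (1, 0) \<alpha>) (F qy))"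
    using Kix Kiy by (simp add: F_mult qsmult_qmono qx_def qy_def)
  from arg_cong[OF this, of "\<lambda>p. Poly_Mapping.lookup p (i + 1, j + 1)"]
  have "q * (Poly_Mapping.lookup (F qy) (i, j + 1) * q powi j
             + \<beta> * Poly_Mapping.lookup (F qx) (i + 1, j) * q powi i)
      = q * (Poly_Mapping.lookup (F qx) (i + 1, j) + \<alpha> * Poly_Mapping.lookup (F qy) (i, j + 1))"
    using \<open>q \<noteq> 0\<close>
    by (simp add: lookup_add lookup_qsmult lookup_qmult_single_left lookup_qmult_single_right
        qx_def qy_def qmono_def power_int_add algebra_simps)
  then show ?thesis
    unfolding mult_left_cancel[OF \<open>q \<noteq> 0\<close>] by algebra
qed

theorem lemma5:
  fixes q \<alpha> \<beta> :: complex and K Ki E F :: "qtorus \<Rightarrow> qtorus"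
  assumes "q \<noteq> 0"
    and "\<forall>n::nat. n > 0 \<longrightarrow> q ^ n \<noteq> 1"
    and "module_algebra q K Ki E F"
    and "\<alpha> \<noteq> 0" and "\<beta> \<noteq> 0"
    and "K qx = qsmult \<alpha> qx" and "K qy = qsmult \<beta> qy"
  shows "\<forall>i j :: int.
     Poly_Mapping.lookup (E qx) (i + 1, j) * (q powi i - \<beta>) = Poly_Mapping.lookup (E qy) (i, j + 1) * (1 - \<alpha> * q powi j)
   \<and> Poly_Mapping.lookup (F qx) (i + 1, j) * (1 - inverse \<beta> * q powi i) = Poly_Mapping.lookup (F qy) (i, j + 1) * (q powi j - inverse \<alpha>)"
proof (intro allI conjI)
  fix i j :: int
  note M = assms(3)[unfolded module_algebra_def qlinear_def]
  from M have E_smult: "\<forall>c a. E (qsmult c a) = qsmult c (E a)"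
    and E_mult: "\<forall>a b. E (qmult q a b) = qmult q a (E b) + qmult q (E a) (K b)"
    and F_smult: "\<forall>c a. F (qsmult c a) = qsmult c (F a)"
    and F_mult: "\<forall>a b. F (qmult q a b) = qmult q (F a) b + qmult q (Ki a) (F b)"
    by simp_all
  show "Poly_Mapping.lookup (E qx) (i + 1, j) * (q powi i - \<beta>) =
        Poly_Mapping.lookup (E qy) (i, j + 1) * (1 - \<alpha> * q powi j)"
    using coeff_relation_E[OF assms(1) E_smult E_mult assms(6,7)] .
  have "Ki qx = qsmult (inverse \<alpha>) qx" and "Ki qy = qsmult (inverse \<beta>) qy"
    using eigenvector_inverse assms(3-7) unfolding module_algebra_def by blast+
  with coeff_relation_F[OF assms(1) F_smult F_mult]
  show "Poly_Mapping.lookup (F qx) (i + 1, j) * (1 - inverse \<beta> * q powi i) =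
        Poly_Mapping.lookup (F qy) (i, j + 1) * (q powi j - inverse \<alpha>)"
    by blast
qed

end
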